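(* Let $X$ be a finite-dimensional real Hilbert space and $A,B$ closed convex subsets of $X$ with $\operatorname{ri}A\cap\operatorname{ri}B\ne\varnothing$. Let $L=\operatorname{aff}(A\cup B)$, $T=P_BR_A+\mathrm{Id}-P_A$, and let $c\in A\cap B$. Then there exist $\delta>0$ and $\theta\in[0,1[$ such that for all $x\in L$ with $\|x-c\|\le\delta$: $\langle P_Ax-R_Ax,\;P_BR_Ax-R_Ax\rangle\le\theta\,d_A(x)\,d_B(R_Ax)$, and consequently $\|x-Tx\|^2\ge\frac{1-\theta}{5}\max\{d_A^2(x),d_B^2(x)\}$.
   Context: $P_S$ is the metric projection onto a closed convex set $S$, $R_S=2P_S-\mathrm{Id}$, $d_S$ the distance function, $\operatorname{aff}$ the affine hull, $\operatorname{ri}$ the relative interior. *)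

theory Defs
  imports "HOL-Analysis.Analysis"
begin

definition reflector :: "'a::euclidean_space set \<Rightarrow> 'a \<Rightarrow> 'a" where
  "reflector S x = 2 *\<^sub>R closest_point S x - x"

end

theory Submission
  imports Defs
begin

(*
  Write a = P_A x, y = R_A x, b = P_B y, u = x - a and w = y - b.  Then u and w are
  outer normals of A at a and of B at b, P_A x - R_A x = u, P_B y - y = -w,
  x - T x = u + w and x - b = 2u + w.  Everything therefore reduces to showing that,
  near c and within the affine hull L of A \<union> B, the unit normals sgn u and sgn w are
  never close to being opposite: |sgn u + sgn w| \<ge> \<epsilon> > 0.

  This is proved from a common relative interior point p, which contains balls of
  radius r of both sets inside their affine hulls.  A compactness argument on the unit
  sphere of span (VA \<union> VB), VA and VB being the direction spaces of A and B, yields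
  \<kappa> > 0 such that every unit direction of L makes an inner product \<ge> \<kappa> with some
  vector of norm \<le> 1 in VA or in VB.  Testing the normal cone inequalities at p and at
  p \<plusminus> r t bounds r (\<kappa> - |u + w|) from above, which forces |u + w| \<ge> \<epsilon>.  The
  inner product bound with \<theta> = 1 - \<epsilon>\<^sup>2/2 and the lower bound for |x - T x| follow
  by elementary algebra.
*)

lemma subspace_closest_point_orthogonal:
  fixes S :: "'a::euclidean_space set"
  assumes "subspace S" "s \<in> S"
  shows "inner (z - closest_point S z) s = 0"
proof -
  let ?q = "closest_point S z"
  have cl: "closed S" and cv: "convex S" and ne: "S \<noteq> {}"
    using assms by (auto simp: closed_subspace subspace_imp_convex)
  have q: "?q \<in> S" using closest_point_in_set[OF cl ne] .
  have "?q + s \<in> S" "?q - s \<in> S"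
    using assms q by (simp_all add: subspace_add subspace_diff)
  from closest_point_dot[OF cv cl this(1), of z] closest_point_dot[OF cv cl this(2), of z]
  show ?thesis by (simp add: inner_diff_right)
qed

lemma subspace_closest_point_witness:
  fixes S :: "'a::euclidean_space set"
  assumes "subspace S"
  shows "sgn (closest_point S z) \<in> S \<and> norm (sgn (closest_point S z)) \<le> 1
    \<and> inner z (sgn (closest_point S z)) = norm (closest_point S z)"
proof -
  let ?q = "closest_point S z"
  have q: "?q \<in> S"
    using assms closest_point_in_set closed_subspace subspace_0 by blast
  have "inner (z - ?q) ?q = 0" using subspace_closest_point_orthogonal[OF assms q] .
  then have "inner z ?q = norm ?q * norm ?q"
    by (simp add: inner_diff_left norm_eq_sqrt_inner)
  then show ?thesis
    using q assms by (cases "?q = 0") (auto simp: sgn_div_norm subspace_scale norm_sgn)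
qed

section \<open>A uniform support constant for the span of two subspaces\<close>

text \<open>Every unit vector of span (S1 \<union> S2) has a non-negligible component along S1 or
  along S2, uniformly: by compactness of the unit sphere, the larger of its two
  projections has length at least some fixed \<kappa> > 0.\<close>
lemma span_union_uniform_support:
  fixes S1 S2 :: "'a::euclidean_space set"
  assumes S1: "subspace S1" and S2: "subspace S2"
  obtains \<kappa> where "\<kappa> > 0"
    and "\<And>z. z \<in> span (S1 \<union> S2) \<Longrightarrow> norm z = 1 \<Longrightarrow>
           \<exists>t\<in>S1 \<union> S2. norm t \<le> 1 \<and> \<kappa> \<le> inner z t"
proof (cases "span (S1 \<union> S2) \<inter> sphere 0 1 = {}")
  case True
  then show ?thesis using that[of 1] by (auto simp: disjoint_iff)
next
  case False
  let ?K = "span (S1 \<union> S2) \<inter> sphere 0 1"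
  define f where "f z = max (norm (closest_point S1 z)) (norm (closest_point S2 z))" for z
  have ne1: "S1 \<noteq> {}" and ne2: "S2 \<noteq> {}" using S1 S2 subspace_0 by blast+
  have cont: "continuous_on ?K f"
    unfolding f_def using S1 S2 ne1 ne2
    by (intro continuous_intros continuous_on_closest_point)
       (auto simp: subspace_imp_convex closed_subspace)
  have "compact ?K" by (intro closed_Int_compact) (auto simp: closed_subspace)
  then obtain z0 where z0: "z0 \<in> ?K" and min: "\<And>z. z \<in> ?K \<Longrightarrow> f z0 \<le> f z"
    using continuous_attains_inf[OF _ False cont] by blast
  have pos: "f z0 > 0"
  proof (rule ccontr)
    assume "\<not> f z0 > 0"
    then have "closest_point S1 z0 = 0" "closest_point S2 z0 = 0"
      unfolding f_def by (auto simp: max_def split: if_splits)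
    then have "orthogonal z0 s" if "s \<in> S1 \<union> S2" for s
      using that subspace_closest_point_orthogonal[OF S1, of s z0]
        subspace_closest_point_orthogonal[OF S2, of s z0]
      by (auto simp: orthogonal_def)
    then have "orthogonal z0 z0" using orthogonal_to_span z0 by blast
    then show False using z0 by (simp add: orthogonal_def)
  qed
  show ?thesis
  proof (rule that[OF pos])
    fix z assume "z \<in> span (S1 \<union> S2)" "norm z = 1"
    then have "f z0 \<le> f z" using min by auto
    then consider "f z0 \<le> norm (closest_point S1 z)" | "f z0 \<le> norm (closest_point S2 z)"
      unfolding f_def by linarith
    then show "\<exists>t\<in>S1 \<union> S2. norm t \<le> 1 \<and> f z0 \<le> inner z t"
      using subspace_closest_point_witness[OF S1, of z] subspace_closest_point_witness[OF S2, of z]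
      by cases auto
  qed
qed

lemma affine_hull_direction:
  fixes S :: "'a::euclidean_space set"
  assumes "p \<in> S" "x \<in> affine hull S"
  shows "x - p \<in> span ((\<lambda>y. y - p) ` S)"
proof -
  have "affine hull S = (\<lambda>v. p + v) ` span ((\<lambda>y. y - p) ` S)"
    using affine_hull_span_gen[of p S] assms(1) by (simp add: hull_inc)
  then show ?thesis using assms(2) by auto
qed

lemma rel_interior_direction_ball:
  fixes S :: "'a::euclidean_space set"
  assumes "p \<in> rel_interior S"
  obtains r where "r > 0"
    and "\<And>t. t \<in> span ((\<lambda>y. y - p) ` S) \<Longrightarrow> norm t \<le> r \<Longrightarrow> p + t \<in> S"
proof -
  obtain r where r: "r > 0" "cball p r \<inter> affine hull S \<subseteq> S"
    using assms mem_rel_interior_cball by blast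
  have "p \<in> S" using assms rel_interior_subset by blast
  then have "affine hull S = (\<lambda>v. p + v) ` span ((\<lambda>y. y - p) ` S)"
    using affine_hull_span_gen[of p S] by (simp add: hull_inc)
  then have "p + t \<in> S" if "t \<in> span ((\<lambda>y. y - p) ` S)" "norm t \<le> r" for t
    using r(2) that by (auto simp: dist_norm)
  then show ?thesis using that r(1) by blast
qed

section \<open>Normals of two regularly intersecting sets are not opposite\<close>

lemma normal_displacement_bound:
  fixes u :: "'a::real_inner"
  assumes "norm u = 1" "\<forall>a'\<in>A. inner u (a' - a) \<le> 0" "norm (a - c) \<le> e" "p + s \<in> A"
  shows "inner u s \<le> inner u (c - p) + e"
proof -
  have "inner u (p + s - a) \<le> 0" using assms(2,4) by blast
  moreover have "inner u (a - c) \<le> e"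
    using norm_cauchy_schwarz[of u "a - c"] assms(1,3) by simp
  moreover have "inner u (p + s - a) = inner u s - inner u (a - c) - inner u (c - p)"
    by (simp add: inner_diff_right inner_add_right)
  ultimately show ?thesis by linarith
qed

lemma unit_normals_sum_bound:
  fixes u w t p c a b :: "'a::real_inner"
  assumes r: "r \<ge> 0"
    and ballA: "\<And>s. s \<in> VA \<Longrightarrow> norm s \<le> r \<Longrightarrow> p + s \<in> A"
    and ballB: "\<And>s. s \<in> VB \<Longrightarrow> norm s \<le> r \<Longrightarrow> p + s \<in> B"
    and VA: "subspace VA" and VB: "subspace VB"
    and t: "t \<in> VA \<union> VB" "norm t \<le> 1" "\<kappa> \<le> inner u t"
    and u: "norm u = 1" "\<forall>a'\<in>A. inner u (a' - a) \<le> 0" "norm (a - c) \<le> e"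
    and w: "norm w = 1" "\<forall>b'\<in>B. inner w (b' - b) \<le> 0" "norm (b - c) \<le> e"
  shows "r * (\<kappa> - norm (u + w)) \<le> norm (u + w) * norm (c - p) + 2 * e"
proof -
  let ?s = "norm (u + w)"
  have rt: "norm (r *\<^sub>R t) \<le> r" using t(2) r by (simp add: mult_left_le)
  have "p + 0 \<in> A" "p + 0 \<in> B"
    using ballA[of 0] ballB[of 0] VA VB r by (auto simp: subspace_0)
  then have u0: "0 \<le> inner u (c - p) + e" and w0: "0 \<le> inner w (c - p) + e"
    using normal_displacement_bound[OF u] normal_displacement_bound[OF w] by fastforce+
  have sum: "inner u (c - p) + inner w (c - p) \<le> ?s * norm (c - p)"
    using norm_cauchy_schwarz[of "u + w" "c - p"] by (simp add: inner_add_left)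
  show ?thesis
  proof (cases "t \<in> VA")
    case True
    then have "p + r *\<^sub>R t \<in> A" using ballA VA rt by (simp add: subspace_scale)
    from normal_displacement_bound[OF u this]
    have "r * inner u t \<le> inner u (c - p) + e" by simp
    moreover have "r * \<kappa> \<le> r * inner u t" using t(3) r by (simp add: mult_left_mono)
    moreover have "r * (\<kappa> - ?s) \<le> r * \<kappa>" using r by (simp add: algebra_simps)
    ultimately show ?thesis using w0 sum by linarith
  next
    case False
    then have "- (r *\<^sub>R t) \<in> VB" using t(1) VB by (simp add: subspace_neg subspace_scale)
    then have "p + - (r *\<^sub>R t) \<in> B" using ballB rt by (metis norm_minus_cancel)
    from normal_displacement_bound[OF w this]
    have "- r * inner w t \<le> inner w (c - p) + e" by simp
    moreover have "inner (u + w) t \<le> ?s"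
      using norm_cauchy_schwarz[of "u + w" t] t(2) mult_left_le[of "norm t" ?s] by simp
    then have "inner w t \<le> ?s - \<kappa>" using t(3) by (simp add: inner_add_left)
    then have "r * inner w t \<le> r * (?s - \<kappa>)" using r by (rule mult_left_mono)
    then have "r * (\<kappa> - ?s) \<le> - r * inner w t" by (simp add: algebra_simps)
    ultimately show ?thesis using u0 sum by linarith
  qed
qed

lemma regular_intersection_normals_separated:
  fixes A B :: "'a::euclidean_space set" and c :: 'a
  assumes "rel_interior A \<inter> rel_interior B \<noteq> {}"
  obtains \<delta> \<epsilon> where "\<delta> > 0" "0 < \<epsilon>" "\<epsilon> \<le> 1"
    and "\<And>a b u w. a \<in> A \<Longrightarrow> b \<in> B \<Longrightarrow> norm (a - c) \<le> \<delta> \<Longrightarrow> norm (b - c) \<le> \<delta> \<Longrightarrow>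
           a + u \<in> affine hull (A \<union> B) \<Longrightarrow> norm u = 1 \<Longrightarrow> norm w = 1 \<Longrightarrow>
           \<forall>a'\<in>A. inner u (a' - a) \<le> 0 \<Longrightarrow> \<forall>b'\<in>B. inner w (b' - b) \<le> 0 \<Longrightarrow>
           \<epsilon> \<le> norm (u + w)"
proof -
  obtain p where p: "p \<in> rel_interior A" "p \<in> rel_interior B" using assms by blast
  have pA: "p \<in> A" using p(1) rel_interior_subset by blast
  define VA where "VA = span ((\<lambda>y. y - p) ` A)"
  define VB where "VB = span ((\<lambda>y. y - p) ` B)"
  obtain rA where rA: "rA > 0" "\<And>s. s \<in> VA \<Longrightarrow> norm s \<le> rA \<Longrightarrow> p + s \<in> A"
    using rel_interior_direction_ball[OF p(1)] unfolding VA_def by blast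
  obtain rB where rB: "rB > 0" "\<And>s. s \<in> VB \<Longrightarrow> norm s \<le> rB \<Longrightarrow> p + s \<in> B"
    using rel_interior_direction_ball[OF p(2)] unfolding VB_def by blast
  define r where "r = min rA rB"
  have r: "r > 0" using rA rB by (simp add: r_def)
  have ballA: "p + s \<in> A" if "s \<in> VA" "norm s \<le> r" for s
    using rA(2) that by (auto simp: r_def)
  have ballB: "p + s \<in> B" if "s \<in> VB" "norm s \<le> r" for s
    using rB(2) that by (auto simp: r_def)
  obtain \<kappa> where \<kappa>: "\<kappa> > 0"
    and support: "\<And>z. z \<in> span (VA \<union> VB) \<Longrightarrow> norm z = 1 \<Longrightarrow>
                    \<exists>t\<in>VA \<union> VB. norm t \<le> 1 \<and> \<kappa> \<le> inner z t"
    using span_union_uniform_support[of VA VB] unfolding VA_def VB_def by auto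
  define D where "D = norm (c - p)"
  define \<epsilon> where "\<epsilon> = min 1 (r * \<kappa> / (2 * (r + D)))"
  have D: "D \<ge> 0" by (simp add: D_def)
  show ?thesis
  proof (rule that)
    show "r * \<kappa> / 4 > 0" "0 < \<epsilon>" "\<epsilon> \<le> 1" using r \<kappa> D by (simp_all add: \<epsilon>_def)
    fix a b u w
    assume a: "a \<in> A" "norm (a - c) \<le> r * \<kappa> / 4" "a + u \<in> affine hull (A \<union> B)"
      and b: "b \<in> B" "norm (b - c) \<le> r * \<kappa> / 4"
      and units: "norm u = 1" "norm w = 1"
      and normals: "\<forall>a'\<in>A. inner u (a' - a) \<le> 0" "\<forall>b'\<in>B. inner w (b' - b) \<le> 0"
    have directions: "span ((\<lambda>y. y - p) ` (A \<union> B)) \<subseteq> span (VA \<union> VB)"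
      unfolding VA_def VB_def image_Un by (intro span_mono Un_mono span_superset)
    have "a + u - p \<in> span (VA \<union> VB)"
      using affine_hull_direction[of p "A \<union> B" "a + u"] pA a(3) directions by blast
    moreover have "a - p \<in> span (VA \<union> VB)"
      using a(1) unfolding VA_def by (intro span_base UnI1) (auto intro: span_base)
    ultimately have "u \<in> span (VA \<union> VB)" using span_diff by fastforce
    then obtain t where t: "t \<in> VA \<union> VB" "norm t \<le> 1" "\<kappa> \<le> inner u t"
      using support units(1) by blast
    have "r * (\<kappa> - norm (u + w)) \<le> norm (u + w) * D + 2 * (r * \<kappa> / 4)"
      using unit_normals_sum_bound[OF _ ballA ballB _ _ t units(1) normals(1) a(2)
          units(2) normals(2) b(2)] r
      unfolding D_def VA_def VB_def by auto
    then have "r * \<kappa> / 2 \<le> norm (u + w) * (r + D)" by (simp add: algebra_simps)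
    then have "r * \<kappa> / (2 * (r + D)) \<le> norm (u + w)"
      using r D by (simp add: divide_le_eq algebra_simps)
    then show "\<epsilon> \<le> norm (u + w)" by (simp add: \<epsilon>_def)
  qed
qed

lemma inner_bound_from_sgn_sum:
  fixes u w :: "'a::real_inner"
  assumes "u \<noteq> 0" "w \<noteq> 0" "0 \<le> \<epsilon>" "\<epsilon> \<le> norm (sgn u + sgn w)"
  shows "- inner u w \<le> (1 - \<epsilon>\<^sup>2 / 2) * norm u * norm w"
proof -
  have "\<epsilon>\<^sup>2 \<le> (norm (sgn u + sgn w))\<^sup>2" using assms(3,4) by (simp add: power_mono)
  also have "\<dots> = 2 + 2 * inner (sgn u) (sgn w)"
    using assms(1,2) by (simp add: power2_norm_eq_inner inner_add inner_commute)
      (simp add: power2_norm_eq_inner[symmetric] norm_sgn)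
  finally have "- inner (sgn u) (sgn w) \<le> 1 - \<epsilon>\<^sup>2 / 2" by simp
  moreover have "inner u w = norm u * norm w * inner (sgn u) (sgn w)"
    using assms(1,2) by (simp add: sgn_div_norm field_simps)
  ultimately show ?thesis
    using mult_left_mono[of "- inner (sgn u) (sgn w)" "1 - \<epsilon>\<^sup>2 / 2" "norm u * norm w"]
    by (simp add: algebra_simps)
qed

lemma norm_sum_lower_bound:
  fixes u w :: "'a::real_inner"
  assumes \<theta>: "0 \<le> \<theta>" "\<theta> < 1" and angle: "- inner u w \<le> \<theta> * norm u * norm w"
    and dA: "0 \<le> dA" "dA \<le> norm u" and dB: "0 \<le> dB" "dB \<le> norm (2 *\<^sub>R u + w)"
  shows "(1 - \<theta>) / 5 * max (dA\<^sup>2) (dB\<^sup>2) \<le> (norm (u + w))\<^sup>2"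
proof -
  let ?nu = "norm u" and ?nw = "norm w"
  have "(norm (u + w))\<^sup>2 = ?nu\<^sup>2 + ?nw\<^sup>2 + 2 * inner u w"
    by (simp add: power2_norm_eq_inner inner_add inner_commute)
  moreover have "0 \<le> \<theta> * (?nu - ?nw)\<^sup>2" using \<theta>(1) by simp
  ultimately have lower: "(1 - \<theta>) * (?nu\<^sup>2 + ?nw\<^sup>2) \<le> (norm (u + w))\<^sup>2"
    using angle by (simp add: power2_eq_square algebra_simps)
  have "dB \<le> 2 * ?nu + ?nw"
    using dB(2) norm_triangle_ineq[of "2 *\<^sub>R u" w] by simp
  then have "dB\<^sup>2 \<le> (2 * ?nu + ?nw)\<^sup>2" using dB(1) by (rule power_mono)
  also have "\<dots> \<le> 5 * (?nu\<^sup>2 + ?nw\<^sup>2)"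
    using sum_squares_ge_zero[of "?nu - 2 * ?nw" 0] by (simp add: power2_eq_square algebra_simps)
  finally have dB2: "dB\<^sup>2 \<le> 5 * (?nu\<^sup>2 + ?nw\<^sup>2)" .
  have "dA\<^sup>2 \<le> ?nu\<^sup>2" using dA by (simp add: power_mono)
  then have dA2: "dA\<^sup>2 \<le> 5 * (?nu\<^sup>2 + ?nw\<^sup>2)" by (smt (verit) zero_le_power2)
  from dA2 dB2 have "max (dA\<^sup>2) (dB\<^sup>2) \<le> 5 * (?nu\<^sup>2 + ?nw\<^sup>2)" by simp
  then have "(1 - \<theta>) / 5 * max (dA\<^sup>2) (dB\<^sup>2) \<le> (1 - \<theta>) * (?nu\<^sup>2 + ?nw\<^sup>2)"
    using \<theta>(2) by (simp add: mult_left_mono)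
  with lower show ?thesis by linarith
qed

lemma infdist_closest_point:
  fixes S :: "'a::euclidean_space set"
  assumes "closed S" "S \<noteq> {}"
  shows "infdist x S = norm (x - closest_point S x)"
  using assms by (simp add: infdist_eq_setdist setdist_closest_point dist_norm)

lemma closest_point_sgn_in_affine_hull:
  fixes A B :: "'a::euclidean_space set"
  assumes "closed A" "A \<noteq> {}" "x \<in> affine hull (A \<union> B)"
  shows "closest_point A x + sgn (x - closest_point A x) \<in> affine hull (A \<union> B)"
proof -
  let ?a = "closest_point A x" and ?n = "norm (x - closest_point A x)"
  have "?a \<in> affine hull (A \<union> B)"
    using closest_point_in_set[OF assms(1,2)] by (simp add: hull_inc)
  then have "(1 - 1 / ?n) *\<^sub>R ?a + (1 / ?n) *\<^sub>R x \<in> affine hull (A \<union> B)"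
    using assms(3) by (intro mem_affine) auto
  moreover have "(1 - 1 / ?n) *\<^sub>R ?a + (1 / ?n) *\<^sub>R x = ?a + sgn (x - ?a)"
    by (simp add: sgn_div_norm algebra_simps divide_inverse)
  ultimately show ?thesis by simp
qed

lemma closest_point_sgn_normal:
  fixes S :: "'a::euclidean_space set"
  assumes "convex S" "closed S"
  shows "\<forall>s\<in>S. inner (sgn (z - closest_point S z)) (s - closest_point S z) \<le> 0"
  using closest_point_dot[OF assms] by (simp add: sgn_div_norm mult_nonneg_nonpos)

text \<open>The projection and the reflection are nonexpansive around a common fixed
  point c, so the points P_A x and P_B (R_A x) stay close to c when x does.\<close>
lemma reflection_step_near_fixed_point:
  fixes A B :: "'a::euclidean_space set"
  assumes A: "closed A" "convex A" and B: "closed B" "convex B" and c: "c \<in> A \<inter> B"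
    and xc: "norm (x - c) \<le> e"
  shows "norm (closest_point A x - c) \<le> e" "norm (closest_point B (reflector A x) - c) \<le> 3 * e"
proof -
  have neA: "A \<noteq> {}" and neB: "B \<noteq> {}" using c by auto
  show ac: "norm (closest_point A x - c) \<le> e"
    using closest_point_lipschitz[OF A(2,1) neA, of x c] closest_point_self[of c A] c xc
    by (simp add: dist_norm)
  have "reflector A x - c = 2 *\<^sub>R (closest_point A x - c) - (x - c)"
    by (simp add: reflector_def algebra_simps scaleR_2)
  then have "norm (reflector A x - c) \<le> 3 * e"
    using norm_triangle_ineq4[of "2 *\<^sub>R (closest_point A x - c)" "x - c"] ac xc by simp
  then show "norm (closest_point B (reflector A x) - c) \<le> 3 * e"
    using closest_point_lipschitz[OF B(2,1) neB, of "reflector A x" c] closest_point_self[of c B] c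
    by (simp add: dist_norm)
qed

lemma reflection_normals_angle_bound:
  fixes A B :: "'a::euclidean_space set" and c :: 'a
  assumes A: "closed A" "convex A" and B: "closed B" "convex B"
    and regular: "rel_interior A \<inter> rel_interior B \<noteq> {}" and c: "c \<in> A \<inter> B"
  obtains \<delta> \<theta> where "\<delta> > 0" "0 \<le> \<theta>" "\<theta> < 1"
    and "\<And>x. x \<in> affine hull (A \<union> B) \<Longrightarrow> norm (x - c) \<le> \<delta> \<Longrightarrow>
           - inner (x - closest_point A x) (reflector A x - closest_point B (reflector A x))
             \<le> \<theta> * norm (x - closest_point A x) * norm (reflector A x - closest_point B (reflector A x))"
proof -
  obtain \<delta> \<epsilon> where \<delta>: "\<delta> > 0" and \<epsilon>: "0 < \<epsilon>" "\<epsilon> \<le> 1"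
    and separated: "\<And>a b u w. a \<in> A \<Longrightarrow> b \<in> B \<Longrightarrow> norm (a - c) \<le> \<delta> \<Longrightarrow> norm (b - c) \<le> \<delta> \<Longrightarrow>
           a + u \<in> affine hull (A \<union> B) \<Longrightarrow> norm u = 1 \<Longrightarrow> norm w = 1 \<Longrightarrow>
           \<forall>a'\<in>A. inner u (a' - a) \<le> 0 \<Longrightarrow> \<forall>b'\<in>B. inner w (b' - b) \<le> 0 \<Longrightarrow>
           \<epsilon> \<le> norm (u + w)"
    using regular_intersection_normals_separated[OF regular] by metis
  have neA: "A \<noteq> {}" and neB: "B \<noteq> {}" using c by auto
  have \<theta>: "0 \<le> 1 - \<epsilon>\<^sup>2 / 2" "1 - \<epsilon>\<^sup>2 / 2 < 1"
    using \<epsilon> power_le_one[of \<epsilon> 2] by auto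
  show ?thesis
  proof (rule that[OF _ \<theta>])
    show "\<delta> / 3 > 0" using \<delta> by simp
    fix x assume xL: "x \<in> affine hull (A \<union> B)" and xc: "norm (x - c) \<le> \<delta> / 3"
    define a where "a = closest_point A x"
    define y where "y = reflector A x"
    define b where "b = closest_point B y"
    have ac: "norm (a - c) \<le> \<delta>" and bc: "norm (b - c) \<le> \<delta>"
      using reflection_step_near_fixed_point[OF A B c xc] \<delta> by (simp_all add: a_def b_def y_def)
    have "- inner (x - a) (y - b) \<le> (1 - \<epsilon>\<^sup>2 / 2) * norm (x - a) * norm (y - b)"
    proof (cases "x - a = 0 \<or> y - b = 0")
      case True
      then show ?thesis using \<theta>(1) by auto
    next
      case False
      have "a \<in> A" "b \<in> B"
        using closest_point_in_set[OF A(1) neA] closest_point_in_set[OF B(1) neB]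
        by (simp_all add: a_def b_def)
      from separated[OF this _ bc closest_point_sgn_in_affine_hull[OF A(1) neA xL, folded a_def]
          _ _ closest_point_sgn_normal[OF A(2,1), of x, folded a_def]
          closest_point_sgn_normal[OF B(2,1), of y, folded b_def]]
      have "\<epsilon> \<le> norm (sgn (x - a) + sgn (y - b))"
        using False ac by (simp add: norm_sgn)
      then show ?thesis using False \<epsilon>(1) by (intro inner_bound_from_sgn_sum) auto
    qed
    then show "- inner (x - closest_point A x) (reflector A x - closest_point B (reflector A x))
        \<le> (1 - \<epsilon>\<^sup>2 / 2) * norm (x - closest_point A x)
             * norm (reflector A x - closest_point B (reflector A x))"
      by (simp add: a_def y_def b_def)
  qed
qed

theorem lemma4p2:
  fixes A B :: "'a::euclidean_space set" and c :: 'a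
  assumes "closed A" "convex A" "closed B" "convex B"
    and "rel_interior A \<inter> rel_interior B \<noteq> {}"
    and "c \<in> A \<inter> B"
  defines "L \<equiv> affine hull (A \<union> B)"
    and "T \<equiv> (\<lambda>x. closest_point B (reflector A x) + x - closest_point A x)"
  shows "\<exists>\<delta>>0. \<exists>\<theta>. 0 \<le> \<theta> \<and> \<theta> < 1 \<and>
    (\<forall>x\<in>L. norm (x - c) \<le> \<delta> \<longrightarrow>
      inner (closest_point A x - reflector A x) (closest_point B (reflector A x) - reflector A x)
        \<le> \<theta> * infdist x A * infdist (reflector A x) B
      \<and> (norm (x - T x))\<^sup>2 \<ge> (1 - \<theta>) / 5 * max ((infdist x A)\<^sup>2) ((infdist x B)\<^sup>2))"
proof -
  obtain \<delta> \<theta> where \<delta>: "\<delta> > 0" and \<theta>: "0 \<le> \<theta>" "\<theta> < 1"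
    and angle: "\<And>x. x \<in> L \<Longrightarrow> norm (x - c) \<le> \<delta> \<Longrightarrow>
           - inner (x - closest_point A x) (reflector A x - closest_point B (reflector A x))
             \<le> \<theta> * norm (x - closest_point A x) * norm (reflector A x - closest_point B (reflector A x))"
    using reflection_normals_angle_bound[OF assms(1-6)] unfolding L_def by metis
  have neA: "A \<noteq> {}" and neB: "B \<noteq> {}" using assms(6) by auto
  have "(inner (closest_point A x - reflector A x) (closest_point B (reflector A x) - reflector A x)
          \<le> \<theta> * infdist x A * infdist (reflector A x) B)
      \<and> (norm (x - T x))\<^sup>2 \<ge> (1 - \<theta>) / 5 * max ((infdist x A)\<^sup>2) ((infdist x B)\<^sup>2)"
    if x: "x \<in> L" "norm (x - c) \<le> \<delta>" for x
  proof -
    define u where "u = x - closest_point A x"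
    define w where "w = reflector A x - closest_point B (reflector A x)"
    have dA: "infdist x A = norm u" and dRB: "infdist (reflector A x) B = norm w"
      by (simp_all add: u_def w_def infdist_closest_point assms(1,3) neA neB)
    have "x - closest_point B (reflector A x) = 2 *\<^sub>R u + w"
      by (simp add: u_def w_def reflector_def algebra_simps scaleR_2)
    then have dB: "infdist x B \<le> norm (2 *\<^sub>R u + w)"
      using infdist_le[OF closest_point_in_set[OF assms(3) neB], of x "reflector A x"]
      by (simp add: dist_norm)
    have "closest_point A x - reflector A x = u" "closest_point B (reflector A x) - reflector A x = - w"
      and "x - T x = u + w"
      by (simp_all add: u_def w_def T_def reflector_def algebra_simps scaleR_2)
    moreover have uw: "- inner u w \<le> \<theta> * norm u * norm w"
      using angle[OF x] by (simp add: u_def w_def)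
    moreover note norm_sum_lower_bound[OF \<theta> uw infdist_nonneg eq_refl[OF dA] infdist_nonneg dB]
    ultimately show ?thesis using dA dRB by simp
  qed
  then show ?thesis using \<delta> \<theta> by blast
qed

end
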